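(* Let $d\ge1$ and let $(\boldsymbol X_1,Y_1)=(X_{1,1},\ldots,X_{1,d},Y_1)$ be a random vector with continuous marginals and $(d+1)$-dimensional copula $C_1$. Fix $\boldsymbol\alpha\in[0,1)^d$ with $C_1(\boldsymbol\alpha,1)<1$. If $C_1$ is $\mathrm{LTD}^1_{d+1}$, then for all $\beta\in(0,1)$, $$\mathrm{VaR}_\beta(Y_1)\le\mathrm{VCoVaR}_{\boldsymbol\alpha,\beta}(Y_1|\boldsymbol X_1)\quad\text{and}\quad \mathrm{ES}_\beta(Y_1)\le\mathrm{VCoES}_{\boldsymbol\alpha,\beta}(Y_1|\boldsymbol X_1).$$
   Context: $C(\boldsymbol{\alpha},v)=C(\alpha_1,\ldots,\alpha_d,v)$. $F^{-1}(t)=\inf\{x:F(x)\ge t\}$, $\mathrm{VaR}_t(Z)=F_Z^{-1}(t)$, $\mathrm{ES}_\beta(Z)=\frac1{1-\beta}\int_\beta^1\mathrm{VaR}_t(Z)\,dt$. $\mathrm{VCoVaR}_{\boldsymbol\alpha,t}(Y_1|\boldsymbol X_1)$ is the $t$-quantile of the conditional distribution of $Y_1$ given $\{\exists\, i: X_{1,i}>\mathrm{VaR}_{\alpha_i}(X_{1,i})\}$; $\mathrm{VCoES}_{\boldsymbol\alpha,\beta}(Y_1|\boldsymbol X_1)=\frac1{1-\beta}\int_\beta^1\mathrm{VCoVaR}_{\boldsymbol\alpha,t}(Y_1|\boldsymbol X_1)\,dt$. A $(d+1)$-dimensional copula $C$ is $\mathrm{LTD}^1_{d+1}$ if $C(u_1,\ldots,u_d,v)/v$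 is nonincreasing in $v\in(0,1]$ for all $u_1,\ldots,u_d$ (equivalently, for $(U_1,\ldots,U_d,V)\sim C$, $P(U_1\le u_1,\ldots,U_d\le u_d\mid V\le v)$ is nonincreasing in $v$). *)

theory Defs
  imports "HOL-Probability.Probability"
begin

text \<open>A random vector of dimension n+1 is represented by Z :: nat => 'a => real, with
  components Z 0, ..., Z n; points of [0,1]^n are functions w :: nat => real, only the
  coordinates i < n being relevant.\<close>

definition unit_box :: "nat \<Rightarrow> (nat \<Rightarrow> real) set" where
  "unit_box n = {w. \<forall>i<n. 0 \<le> w i \<and> w i \<le> 1}"

definition copula :: "nat \<Rightarrow> ((nat \<Rightarrow> real) \<Rightarrow> real) \<Rightarrow> bool" where
  "copula n C \<longleftrightarrow>
     (\<forall>w w'. (\<forall>i<n. w i = w' i) \<longrightarrow> C w = C w') \<and>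
     (\<forall>w\<in>unit_box n. (\<exists>i<n. w i = 0) \<longrightarrow> C w = 0) \<and>
     (\<forall>w\<in>unit_box n. \<forall>k<n. (\<forall>i<n. i \<noteq> k \<longrightarrow> w i = 1) \<longrightarrow> C w = w k) \<and>
     (\<forall>a\<in>unit_box n. \<forall>b\<in>unit_box n. (\<forall>i<n. a i \<le> b i) \<longrightarrow>
        0 \<le> (\<Sum>S\<in>Pow {..<n}. (-1) ^ card S * C (\<lambda>i. if i \<in> S then a i else b i)))"

definition is_copula_of :: "'a measure \<Rightarrow> (nat \<Rightarrow> 'a \<Rightarrow> real) \<Rightarrow> nat \<Rightarrow> ((nat \<Rightarrow> real) \<Rightarrow> real) \<Rightarrow> bool" where
  "is_copula_of M Z d C \<longleftrightarrow> copula (Suc d) C \<and>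
     (\<forall>x. measure M {\<omega>\<in>space M. \<forall>i\<le>d. Z i \<omega> \<le> x i}
          = C (\<lambda>i. cdf (distr M borel (Z i)) (x i)))"

definition LTD1 :: "nat \<Rightarrow> ((nat \<Rightarrow> real) \<Rightarrow> real) \<Rightarrow> bool" where
  "LTD1 d C \<longleftrightarrow> (\<forall>u\<in>unit_box d. \<forall>v v'. 0 < v \<longrightarrow> v \<le> v' \<longrightarrow> v' \<le> 1 \<longrightarrow>
      C (u(d := v')) / v' \<le> C (u(d := v)) / v)"

text \<open>Generalised inverse F^{-1}(t) = inf {x. F x >= t}, in the extended reals
  (so that inf of the empty set is +infinity and inf of all reals is -infinity).\<close>
definition quantile :: "(real \<Rightarrow> real) \<Rightarrow> real \<Rightarrow> ereal" where
  "quantile F t = Inf {ereal x | x. t \<le> F x}"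

definition VaR :: "'a measure \<Rightarrow> ('a \<Rightarrow> real) \<Rightarrow> real \<Rightarrow> ereal" where
  "VaR M X t = quantile (cdf (distr M borel X)) t"

definition ext_set_integral :: "real set \<Rightarrow> (real \<Rightarrow> ereal) \<Rightarrow> ereal" where
  "ext_set_integral S f =
     enn2ereal (\<integral>\<^sup>+ t. indicator S t * e2ennreal (f t) \<partial>lborel)
     - enn2ereal (\<integral>\<^sup>+ t. indicator S t * e2ennreal (- f t) \<partial>lborel)"

definition ES :: "'a measure \<Rightarrow> ('a \<Rightarrow> real) \<Rightarrow> real \<Rightarrow> ereal" where
  "ES M X \<beta> = ext_set_integral {\<beta>..1} (VaR M X) / ereal (1 - \<beta>)"

text \<open>Stress event: some X_i = Z i (i < d) exceeds its VaR at level alpha_i.\<close>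
definition stress_event :: "'a measure \<Rightarrow> (nat \<Rightarrow> 'a \<Rightarrow> real) \<Rightarrow> nat \<Rightarrow> (nat \<Rightarrow> real) \<Rightarrow> 'a set" where
  "stress_event M Z d \<alpha> = {\<omega>\<in>space M. \<exists>i<d. VaR M (Z i) (\<alpha> i) < ereal (Z i \<omega>)}"

definition cond_cdf :: "'a measure \<Rightarrow> (nat \<Rightarrow> 'a \<Rightarrow> real) \<Rightarrow> nat \<Rightarrow> (nat \<Rightarrow> real) \<Rightarrow> real \<Rightarrow> real" where
  "cond_cdf M Z d \<alpha> y =
     measure M ({\<omega>\<in>space M. Z d \<omega> \<le> y} \<inter> stress_event M Z d \<alpha>)
     / measure M (stress_event M Z d \<alpha>)"

definition VCoVaR :: "'a measure \<Rightarrow> (nat \<Rightarrow> 'a \<Rightarrow> real) \<Rightarrow> nat \<Rightarrow> (nat \<Rightarrow> real) \<Rightarrow> real \<Rightarrow> ereal" where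
  "VCoVaR M Z d \<alpha> t = quantile (cond_cdf M Z d \<alpha>) t"

definition VCoES :: "'a measure \<Rightarrow> (nat \<Rightarrow> 'a \<Rightarrow> real) \<Rightarrow> nat \<Rightarrow> (nat \<Rightarrow> real) \<Rightarrow> real \<Rightarrow> ereal" where
  "VCoES M Z d \<alpha> \<beta> = ext_set_integral {\<beta>..1} (VCoVaR M Z d \<alpha>) / ereal (1 - \<beta>)"

end

theory Submission
  imports Defs
begin

text \<open>Let \<open>S\<close> be the complement of the stress event, the lower orthant
  \<open>{X\<^sub>i \<le> VaR\<^sub>\<alpha>\<^sub>i(X\<^sub>i)}\<close>. By Sklar's relation \<open>P(S \<inter> {Y \<le> y}) = C(\<alpha>, F\<^sub>Y(y))\<close>, so the LTD
  property says that \<open>P(S | Y \<le> y)\<close> is nonincreasing in \<open>y\<close>; comparing with the limit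
  \<open>y \<rightarrow> \<infinity>\<close> gives \<open>P(S | Y \<le> y) \<ge> P(S)\<close>, which is equivalent to
  \<open>P(Y \<le> y | \<not> S) \<le> P(Y \<le> y)\<close>. A pointwise smaller cdf has pointwise larger quantiles,
  and integrating the quantiles over \<open>[\<beta>, 1]\<close> transfers the inequality to ES.\<close>

lemma quantile_antimono:
  assumes "\<And>x. G x \<le> F x"
  shows "quantile F t \<le> quantile G t"
  unfolding quantile_def
  by (rule Inf_superset_mono) (auto intro: order_trans[OF _ assms])

lemma quantile_zero:
  assumes "\<And>x. 0 \<le> F x"
  shows "quantile F 0 = -\<infinity>"
  unfolding quantile_def by (rule ereal_bot, rule Inf_lower) (use assms in auto)

lemma quantile_continuous_attained:
  fixes F :: "real \<Rightarrow> real"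
  assumes cont: "continuous_on UNIV F"
    and bot: "(F \<longlongrightarrow> 0) at_bot" and top: "(F \<longlongrightarrow> 1) at_top"
    and a: "0 < a" "a < 1"
  obtains q where "quantile F a = ereal q" "F q = a"
proof -
  define A where "A = {x. a \<le> F x}"
  obtain x0 where "F x0 > a"
    using order_tendstoD(1)[OF top \<open>a < 1\<close>] by (auto simp: eventually_at_top_linorder)
  then have A_ne: "A \<noteq> {}"
    unfolding A_def by (auto intro: less_imp_le)
  obtain b where b: "\<And>x. x \<le> b \<Longrightarrow> F x < a"
    using order_tendstoD(2)[OF bot \<open>0 < a\<close>] by (auto simp: eventually_at_bot_linorder)
  then have b_less: "b < x" if "x \<in> A" for x
    using that unfolding A_def by (meson mem_Collect_eq not_le)
  then have bdd: "bdd_below A"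
    by (meson bdd_below.I less_imp_le)
  have "closed A"
    unfolding A_def by (rule closed_Collect_le) (auto intro: continuous_on_subset[OF cont])
  define q where "q = Inf A"
  have "q \<in> A"
    unfolding q_def by (rule closed_contains_Inf[OF A_ne bdd \<open>closed A\<close>])
  then have "b < q" "a \<le> F q"
    using b_less unfolding A_def by auto
  moreover have "F b \<le> a"
    using b by (simp add: less_imp_le)
  ultimately obtain x where x: "x \<le> q" "F x = a"
    using IVT'[of F b a q] continuous_on_subset[OF cont] by force
  then have "x \<in> A"
    unfolding A_def by simp
  then have "q \<le> x"
    unfolding q_def using bdd by (rule cInf_lower)
  with x have "F q = a"
    by simp
  moreover have "quantile F a = ereal q"
    unfolding quantile_def A_def q_def
    using ereal_Inf'[OF bdd A_ne] by (simp add: A_def setcompr_eq_image)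
  ultimately show thesis
    by (rule that[rotated])
qed

lemma ext_set_integral_mono:
  assumes "\<And>t. f t \<le> g t"
  shows "ext_set_integral S f \<le> ext_set_integral S g"
  unfolding ext_set_integral_def
proof (rule ereal_minus_mono)
  show "enn2ereal (\<integral>\<^sup>+ t. indicator S t * e2ennreal (f t) \<partial>lborel)
      \<le> enn2ereal (\<integral>\<^sup>+ t. indicator S t * e2ennreal (g t) \<partial>lborel)"
    by (intro less_eq_ennreal.rep_eq[THEN iffD1] nn_integral_mono mult_left_mono
        e2ennreal_mono assms) auto
  show "enn2ereal (\<integral>\<^sup>+ t. indicator S t * e2ennreal (- g t) \<partial>lborel)
      \<le> enn2ereal (\<integral>\<^sup>+ t. indicator S t * e2ennreal (- f t) \<partial>lborel)"
    by (intro less_eq_ennreal.rep_eq[THEN iffD1] nn_integral_mono mult_left_mono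
        e2ennreal_mono) (auto simp: assms)
qed

lemma cdf_distr:
  assumes "X \<in> borel_measurable M"
  shows "cdf (distr M borel X) y = measure M {\<omega>\<in>space M. X \<omega> \<le> y}"
  using assms unfolding cdf_def
  by (subst measure_distr) (auto intro: arg_cong[where f = "measure M"])

lemma (in prob_space) prob_le_tendsto_one:
  fixes Y :: "'a \<Rightarrow> real"
  assumes "Y \<in> borel_measurable M"
  shows "((\<lambda>y. prob {\<omega>\<in>space M. Y \<omega> \<le> y}) \<longlongrightarrow> 1) at_top"
proof -
  have "cdf (distr M borel Y) = (\<lambda>y. prob {\<omega>\<in>space M. Y \<omega> \<le> y})"
    using cdf_distr[OF assms] by (rule ext)
  moreover have "real_distribution (distr M borel Y)"
    using assms by simp
  ultimately show ?thesis
    using real_distribution.cdf_lim_at_top_prob by metis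
qed

lemma (in prob_space) VaR_zero:
  fixes X :: "'a \<Rightarrow> real"
  assumes "X \<in> borel_measurable M"
  shows "VaR M X 0 = -\<infinity>"
  unfolding VaR_def using assms
  by (intro quantile_zero finite_borel_measure.cdf_nonneg
      real_distribution.finite_borel_measure_M) simp

lemma (in prob_space) VaR_continuous_attained:
  fixes X :: "'a \<Rightarrow> real"
  assumes X: "X \<in> borel_measurable M" and cont: "continuous_on UNIV (cdf (distr M borel X))"
    and a: "0 < a" "a < 1"
  obtains q where "VaR M X a = ereal q" "cdf (distr M borel X) q = a"
proof (rule quantile_continuous_attained[OF cont _ _ a])
  show "(cdf (distr M borel X) \<longlongrightarrow> 0) at_bot"
    using X by (intro finite_borel_measure.cdf_lim_at_bot
        real_distribution.finite_borel_measure_M) simp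
  show "(cdf (distr M borel X) \<longlongrightarrow> 1) at_top"
    using X by (intro real_distribution.cdf_lim_at_top_prob) simp
qed (use that in \<open>auto simp: VaR_def\<close>)

text \<open>\<open>P(S)\<close> is compared with \<open>P(S | Y \<le> y)\<close> through
  \<open>P(S) \<le> P(S \<inter> {Y \<le> n}) + P(Y > n)\<close> and \<open>n \<rightarrow> \<infinity>\<close>, which needs no continuity in \<open>y\<close>.\<close>

lemma (in prob_space) prob_mult_le_prob_inter_if_cond_antimono:
  fixes Y :: "'a \<Rightarrow> real"
  assumes Y: "Y \<in> borel_measurable M" and S: "S \<in> events"
    and antimono: "\<And>y y'. y \<le> y' \<Longrightarrow> 0 < prob {\<omega>\<in>space M. Y \<omega> \<le> y} \<Longrightarrow>
      prob (S \<inter> {\<omega>\<in>space M. Y \<omega> \<le> y'}) / prob {\<omega>\<in>space M. Y \<omega> \<le> y'}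
      \<le> prob (S \<inter> {\<omega>\<in>space M. Y \<omega> \<le> y}) / prob {\<omega>\<in>space M. Y \<omega> \<le> y}"
  shows "prob S * prob {\<omega>\<in>space M. Y \<omega> \<le> y} \<le> prob (S \<inter> {\<omega>\<in>space M. Y \<omega> \<le> y})"
proof -
  define L where "L y = {\<omega>\<in>space M. Y \<omega> \<le> y}" for y
  have L: "L n \<in> events" for n
    unfolding L_def using Y by measurable
  show ?thesis
  proof (cases "prob (L y) = 0")
    case True
    then show ?thesis
      by (simp add: L_def)
  next
    case False
    then have Ly: "0 < prob (L y)"
      by (simp add: order_less_le)
    define r where "r = prob (S \<inter> L y) / prob (L y)"
    have "prob S \<le> prob (L n) * r + (1 - prob (L n))" if "y \<le> n" for n
    proof -
      have "L y \<subseteq> L n"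
        using that unfolding L_def by auto
      then have Ln: "0 < prob (L n)"
        using Ly finite_measure_mono[OF _ L, of "L y" n] by linarith
      have "S \<subseteq> (S \<inter> L n) \<union> (space M - L n)"
        using sets.sets_into_space[OF S] by auto
      then have "prob S \<le> prob ((S \<inter> L n) \<union> (space M - L n))"
        using S L by (intro finite_measure_mono) auto
      also have "\<dots> \<le> prob (S \<inter> L n) + (1 - prob (L n))"
        using measure_Un_le[of "S \<inter> L n" M "space M - L n"] prob_compl[OF L, of n] S L
        by (simp add: sets.Int sets.Diff)
      also have "prob (S \<inter> L n) \<le> prob (L n) * r"
        using antimono[OF that] Ly Ln unfolding L_def r_def by (simp add: field_simps)
      finally show ?thesis
        by simp
    qed
    moreover have "((\<lambda>n. prob (L n) * r + (1 - prob (L n))) \<longlongrightarrow> 1 * r + (1 - 1)) at_top"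
      unfolding L_def by (intro tendsto_intros prob_le_tendsto_one Y)
    ultimately have "prob S \<le> r"
      using tendsto_le[OF trivial_limit_at_top_linorder _ tendsto_const
          eventually_at_top_linorderI[of y]] by fastforce
    then show ?thesis
      using Ly unfolding r_def L_def by (simp add: field_simps)
  qed
qed

lemma (in prob_space) cond_prob_compl_le:
  assumes A: "A \<in> events" and S: "S \<in> events"
    and pos_dep: "prob S * prob A \<le> prob (S \<inter> A)"
  shows "prob (A \<inter> (space M - S)) / prob (space M - S) \<le> prob A"
proof -
  have "A \<inter> (space M - S) = A - (S \<inter> A)"
    using sets.sets_into_space[OF A] by auto
  then have num: "prob (A \<inter> (space M - S)) = prob A - prob (S \<inter> A)"
    using finite_measure_Diff[OF A, of "S \<inter> A"] S A by auto
  have den: "prob (space M - S) = 1 - prob S"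
    using prob_compl[OF S] .
  show ?thesis
  proof (cases "prob S = 1")
    case True
    \<comment> \<open>\<open>space M - S\<close> is null and the quotient is \<open>x / 0 = 0\<close>; this is why the
      theorem does not need its hypothesis \<open>C(\<alpha>, 1) < 1\<close>\<close>
    then show ?thesis
      by (simp add: den)
  next
    case False
    then have "0 < 1 - prob S"
      using prob_le_1[of S] by linarith
    moreover have "prob A - prob (S \<inter> A) \<le> prob A * (1 - prob S)"
      using pos_dep by (simp add: algebra_simps)
    ultimately show ?thesis
      unfolding num den by (simp add: divide_le_eq)
  qed
qed

lemma prob_orthant_eq_copula:
  assumes cop: "is_copula_of M Z d C"
    and q: "\<And>i. i < d \<Longrightarrow> cdf (distr M borel (Z i)) (q i) = \<alpha> i"
  shows "measure M ({\<omega>\<in>space M. \<forall>i<d. Z i \<omega> \<le> q i} \<inter> {\<omega>\<in>space M. Z d \<omega> \<le> y})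
    = C (\<alpha>(d := cdf (distr M borel (Z d)) y))"
proof -
  define x where "x i = (if i < d then q i else y)" for i
  have "{\<omega>\<in>space M. \<forall>i<d. Z i \<omega> \<le> q i} \<inter> {\<omega>\<in>space M. Z d \<omega> \<le> y}
      = {\<omega>\<in>space M. \<forall>i\<le>d. Z i \<omega> \<le> x i}"
    unfolding x_def by (auto simp: le_less)
  then have "measure M ({\<omega>\<in>space M. \<forall>i<d. Z i \<omega> \<le> q i} \<inter> {\<omega>\<in>space M. Z d \<omega> \<le> y})
      = C (\<lambda>i. cdf (distr M borel (Z i)) (x i))"
    using cop unfolding is_copula_of_def by simp
  also have "\<dots> = C (\<alpha>(d := cdf (distr M borel (Z d)) y))"
    using cop unfolding is_copula_of_def copula_def
    by (elim conjE allE impE) (auto simp: x_def q less_Suc_eq)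
  finally show ?thesis .
qed

lemma (in prob_space) cond_prob_compl_orthant_le:
  assumes meas: "\<forall>i\<le>d. Z i \<in> borel_measurable M"
    and cop: "is_copula_of M Z d C" and ltd: "LTD1 d C" and \<alpha>: "\<alpha> \<in> unit_box d"
    and q: "\<And>i. i < d \<Longrightarrow> cdf (distr M borel (Z i)) (q i) = \<alpha> i"
  defines "S \<equiv> {\<omega>\<in>space M. \<forall>i<d. Z i \<omega> \<le> q i}"
  shows "prob ({\<omega>\<in>space M. Z d \<omega> \<le> y} \<inter> (space M - S)) / prob (space M - S)
    \<le> prob {\<omega>\<in>space M. Z d \<omega> \<le> y}"
proof -
  define F where "F y = prob {\<omega>\<in>space M. Z d \<omega> \<le> y}" for y
  have Z_d: "Z d \<in> borel_measurable M"
    using meas by simp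
  have "S = {\<omega>\<in>space M. \<forall>i\<in>{..<d}. Z i \<omega> \<le> q i}"
    unfolding S_def by blast
  also have "\<dots> \<in> events"
    using meas by (intro sets.sets_Collect_finite_All borel_measurable_le) auto
  finally have S: "S \<in> events" .
  have S_inter: "prob (S \<inter> {\<omega>\<in>space M. Z d \<omega> \<le> y}) = C (\<alpha>(d := F y))" for y
    unfolding S_def F_def cdf_distr[OF Z_d, symmetric] using q
    by (intro prob_orthant_eq_copula[OF cop]) blast
  have "prob (S \<inter> {\<omega>\<in>space M. Z d \<omega> \<le> y'}) / F y'
      \<le> prob (S \<inter> {\<omega>\<in>space M. Z d \<omega> \<le> y}) / F y"
    if "y \<le> y'" "0 < F y" for y y'
  proof -
    have "F y \<le> F y'" "F y' \<le> 1"
      using that(1) Z_d unfolding F_def cdf_distr[OF Z_d, symmetric]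
      by (auto intro: finite_borel_measure.cdf_nondecreasing
          real_distribution.finite_borel_measure_M real_distribution.cdf_bounded_prob)
    then show ?thesis
      unfolding S_inter using ltd \<alpha> \<open>0 < F y\<close> unfolding LTD1_def by blast
  qed
  then show ?thesis
    using Z_d S unfolding F_def
    by (intro cond_prob_compl_le prob_mult_le_prob_inter_if_cond_antimono) auto
qed

lemma cond_cdf_le_cdf:
  assumes "prob_space M"
    and meas: "\<forall>i\<le>d. Z i \<in> borel_measurable M"
    and cont: "\<forall>i\<le>d. continuous_on UNIV (cdf (distr M borel (Z i)))"
    and cop: "is_copula_of M Z d C"
    and \<alpha>: "\<forall>i<d. 0 \<le> \<alpha> i \<and> \<alpha> i < 1"
    and ltd: "LTD1 d C"
  shows "cond_cdf M Z d \<alpha> y \<le> cdf (distr M borel (Z d)) y"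
proof -
  interpret prob_space M by fact
  note cdf_Y = cdf_distr[of "Z d" M, OF meas[rule_format, OF order_refl]]
  show ?thesis
  proof (cases "\<exists>i<d. \<alpha> i = 0")
    case True
    then obtain i where "i < d" "\<alpha> i = 0"
      by blast
    then have "VaR M (Z i) (\<alpha> i) = -\<infinity>"
      using VaR_zero[of "Z i"] meas by simp
    then have "stress_event M Z d \<alpha> = space M"
      using \<open>i < d\<close> unfolding stress_event_def by auto
    then show ?thesis
      unfolding cond_cdf_def cdf_Y by (simp add: Int_absorb2 prob_space)
  next
    case False
    have "\<exists>q. VaR M (Z i) (\<alpha> i) = ereal q \<and> cdf (distr M borel (Z i)) q = \<alpha> i"
      if "i < d" for i
    proof -
      have "0 < \<alpha> i" "\<alpha> i < 1"
        using False \<alpha> \<open>i < d\<close> by (auto simp: order_le_less)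
      obtain q where "VaR M (Z i) (\<alpha> i) = ereal q" "cdf (distr M borel (Z i)) q = \<alpha> i"
        by (rule VaR_continuous_attained[of "Z i" "\<alpha> i"])
          (use meas cont \<open>i < d\<close> \<open>0 < \<alpha> i\<close> \<open>\<alpha> i < 1\<close> in auto)
      then show ?thesis
        by blast
    qed
    then obtain q where q: "\<And>i. i < d \<Longrightarrow>
        VaR M (Z i) (\<alpha> i) = ereal (q i) \<and> cdf (distr M borel (Z i)) (q i) = \<alpha> i"
      by metis
    have "\<alpha> \<in> unit_box d"
      using \<alpha> unfolding unit_box_def by auto
    then have "prob ({\<omega>\<in>space M. Z d \<omega> \<le> y} \<inter> (space M - {\<omega>\<in>space M. \<forall>i<d. Z i \<omega> \<le> q i}))
        / prob (space M - {\<omega>\<in>space M. \<forall>i<d. Z i \<omega> \<le> q i}) \<le> prob {\<omega>\<in>space M. Z d \<omega> \<le> y}"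
      using q by (intro cond_prob_compl_orthant_le[OF meas cop ltd]) auto
    moreover have "stress_event M Z d \<alpha> = space M - {\<omega>\<in>space M. \<forall>i<d. Z i \<omega> \<le> q i}"
      unfolding stress_event_def using q by (auto simp: not_le)
    ultimately show ?thesis
      unfolding cond_cdf_def cdf_Y by simp
  qed
qed

theorem corollary4p4:
  fixes M :: "'a measure" and Z :: "nat \<Rightarrow> 'a \<Rightarrow> real" and d :: nat
    and C :: "(nat \<Rightarrow> real) \<Rightarrow> real" and \<alpha> :: "nat \<Rightarrow> real"
  assumes "prob_space M"
    and "d \<ge> 1"
    and "\<forall>i\<le>d. Z i \<in> borel_measurable M"
    and "\<forall>i\<le>d. continuous_on UNIV (cdf (distr M borel (Z i)))"
    and "is_copula_of M Z d C"
    and "\<forall>i<d. 0 \<le> \<alpha> i \<and> \<alpha> i < 1"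
    and "C (\<alpha>(d := 1)) < 1"
    and "LTD1 d C"
  shows "\<forall>\<beta>\<in>{0<..<1}. VaR M (Z d) \<beta> \<le> VCoVaR M Z d \<alpha> \<beta>
                     \<and> ES M (Z d) \<beta> \<le> VCoES M Z d \<alpha> \<beta>"
proof -
  have VaR_le: "VaR M (Z d) t \<le> VCoVaR M Z d \<alpha> t" for t
    unfolding VaR_def VCoVaR_def
    by (intro quantile_antimono cond_cdf_le_cdf) (use assms in auto)
  have "ES M (Z d) \<beta> \<le> VCoES M Z d \<alpha> \<beta>" if "\<beta> < 1" for \<beta>
    unfolding ES_def VCoES_def using that VaR_le
    by (auto intro!: ereal_divide_right_mono ext_set_integral_mono)
  with VaR_le show ?thesis
    by simp
qed

end
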